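(* Assume the setting below with $h$ taking values in $[0,1]$, $n\ge 2m$, and $\delta\in(0,1)$. If $\eta$ is symmetric, then each of the following inequalities holds with probability at least $1-\delta$: \[ \sqrt{W_{n}}\le\sqrt{\sigma^{2}}+\left(\frac{\sqrt{2}}{2}+\frac{\sqrt{6}}{6}\right)\sqrt{\frac{1}{\lfloor n/(2m)\rfloor}\log\frac{1}{\delta}}, \] \[ \sqrt{\sigma^{2}}\le\sqrt{W_{n}}+\left(\frac{\sqrt{2}}{2}+\frac{\sqrt{42}}{6}\right)\sqrt{\frac{1}{\lfloor n/(2m)\rfloor}\log\frac{1}{\delta}}. \] Moreover, without any symmetry assumption on $\eta$, both inequalities hold (each with probability at least $1-\delta$) with $W_n$ replaced by $\tilde W_n$.
   Context: Let $\mathbb{X}\subseteq\mathbb{R}^d$ and let $\bm X_1,\dots,\bm X_n\in\mathbb{X}$ be IID with law $F$. Let $m\ge1$ and let $h:\mathbb{X}^m\to[0,1]$ be a measurable symmetric kernel of order $m$ (invariant under every permutation of its $m$ arguments). Set $\sigma^2=\mathbb{V}_F h(\bm X_1,\dots,\bm X_m)$. Define \[ \eta(\bm x_1,\dots,\bm x_{2m})=\tfrac12\left[h(\bm x_1,\dots,\bm x_m)-h(\bm x_{m+1},\dots,\bm x_{2m})\right]^2 , \] call $\eta$ symmetric if it is invariant under every permutation of its $2m$ arguments, and let \[ \tilde\eta(\bm x_1,\dots,\bm x_{2m})=\frac{1}{(2m)!}\sum_{\pi\in\Pi_{2m}}\eta(\bm x_{\pi(1)},\dots,\bm x_{\pi(2m)}),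 \] where $\Pi_{2m}$ is the set of permutations of $\{1,\dots,2m\}$. Let $\mathbb{K}_{2m}$ be the set of all $2m$-element subsets $\{\kappa(1)<\dots<\kappa(2m)\}$ of $\{1,\dots,n\}$, and \[ W_n=\binom{n}{2m}^{-1}\sum_{\kappa\in\mathbb{K}_{2m}}\eta(\bm X_{\kappa(1)},\dots,\bm X_{\kappa(2m)}),\qquad \tilde W_n=\binom{n}{2m}^{-1}\sum_{\kappa\in\mathbb{K}_{2m}}\tilde\eta(\bm X_{\kappa(1)},\dots,\bm X_{\kappa(2m)}). \] $\lfloor\cdot\rfloor$ is the floor function. *)

theory Defs
  imports "HOL-Probability.Probability" "HOL-Combinatorics.Permutations"
begin

text \<open>A data point tuple of length k is represented as a function nat => 'x,
  only the arguments 0..<k matter. The kernel h of order m is applied to the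
  restriction of such a tuple to {..<m}.\<close>

definition kernel_symmetric :: "nat \<Rightarrow> ((nat \<Rightarrow> 'x) \<Rightarrow> real) \<Rightarrow> bool" where
  "kernel_symmetric k g \<longleftrightarrow>
     (\<forall>x \<pi>. \<pi> permutes {..<k} \<longrightarrow> g (restrict (x \<circ> \<pi>) {..<k}) = g (restrict x {..<k}))"

definition eta :: "nat \<Rightarrow> ((nat \<Rightarrow> 'x) \<Rightarrow> real) \<Rightarrow> (nat \<Rightarrow> 'x) \<Rightarrow> real" where
  "eta m h x = (1/2) * (h (restrict x {..<m}) - h (restrict (\<lambda>i. x (m + i)) {..<m}))\<^sup>2"

definition eta_tilde :: "nat \<Rightarrow> ((nat \<Rightarrow> 'x) \<Rightarrow> real) \<Rightarrow> (nat \<Rightarrow> 'x) \<Rightarrow> real" where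
  "eta_tilde m h x =
     (1 / fact (2*m)) * (\<Sum>\<pi>\<in>{\<pi>. \<pi> permutes {..<2*m}}. eta m h (x \<circ> \<pi>))"

definition ustat :: "nat \<Rightarrow> nat \<Rightarrow> ((nat \<Rightarrow> 'x) \<Rightarrow> real) \<Rightarrow> (nat \<Rightarrow> 'a \<Rightarrow> 'x) \<Rightarrow> 'a \<Rightarrow> real" where
  "ustat n k g X \<omega> =
     (\<Sum>K\<in>{K. K \<subseteq> {..<n} \<and> card K = k}.
        g (\<lambda>j. X (sorted_list_of_set K ! j) \<omega>)) / real (n choose k)"

end

theory Submission
  imports Defs
begin

text \<open>Hoeffding's device: for q = 2m and k = \<lfloor>n/q\<rfloor>, the U-statistic is the average, over all
  permutations of the sample, of the means of the kernel over k disjoint blocks of q sample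
  points. Each block mean averages k independent [0,1/2]-valued variables with mean \<sigma>^2
  (for \<eta> this is E (h(X) - h(X'))^2 / 2 = Var h(X) for independent copies X, X').
  By convexity of exp the moment generating function of the U-statistic is dominated by that
  of a single block mean, so Bernstein-type bounds for exp on [0,1/2] and Chernoff's inequality
  give P(W \<ge> \<sigma>^2 + L + \<surd>(2\<sigma>^2L)) \<le> exp(-kL) and P(W \<le> \<sigma>^2 - \<surd>(\<sigma>^2L)) \<le> exp(-kL).
  With L = log(1/\<delta>)/k, completing squares yields both inequalities, even with constant 1
  in front of \<surd>L. The symmetrised kernel \<eta>\<tilde> is symmetric with the same mean as \<eta>,
  so the second part is an instance of the first.\<close>

lemma exp_le_on_half_interval:
  fixes l y :: real
  assumes "0 \<le> l" "l \<le> 2" "0 \<le> y" "y \<le> 1/2"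
  shows "exp (l * y) \<le> 1 + (l + l\<^sup>2 / 2) * y"
proof -
  have "l * y \<le> 2 * (1/2)" using assms by (intro mult_mono) auto
  then have "exp (l * y) \<le> 1 + l * y + (l * y)\<^sup>2" using assms by (intro exp_bound) auto
  also have "(l * y)\<^sup>2 = l\<^sup>2 * y * y" by (simp add: power2_eq_square)
  also have "\<dots> \<le> l\<^sup>2 * y * (1/2)" using assms by (intro mult_left_mono) auto
  finally show ?thesis by (simp add: algebra_simps)
qed

lemma exp_minus_le_quadratic:
  fixes x :: real
  assumes "0 \<le> x"
  shows "exp (- x) \<le> 1 - x + x\<^sup>2 / 2"
proof -
  let ?f = "\<lambda>t::real. 1 - t + t\<^sup>2 / 2 - exp (- t)"
  have "?f 0 \<le> ?f x"
  proof (rule DERIV_nonneg_imp_nondecreasing[OF assms])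
    fix t :: real
    have "DERIV ?f t :> - 1 + t + exp (- t)"
      by (auto intro!: derivative_eq_intros)
    moreover have "- 1 + t + exp (- t) \<ge> 0"
      using exp_ge_add_one_self[of "- t"] by linarith
    ultimately show "\<exists>y. DERIV ?f t :> y \<and> y \<ge> 0" by blast
  qed
  then show ?thesis by simp
qed

lemma exp_minus_le_on_half_interval:
  fixes l y :: real
  assumes "0 \<le> l" "0 \<le> y" "y \<le> 1/2"
  shows "exp (- l * y) \<le> 1 + (- l + l\<^sup>2 / 4) * y"
proof -
  have "exp (- l * y) \<le> 1 - l * y + (l * y)\<^sup>2 / 2"
    using exp_minus_le_quadratic[of "l * y"] assms by simp
  also have "(l * y)\<^sup>2 / 2 = l\<^sup>2 * y * y / 2" by (simp add: power2_eq_square)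
  also have "\<dots> \<le> l\<^sup>2 * y * (1/2) / 2" using assms by (intro divide_right_mono mult_left_mono) auto
  finally show ?thesis by (simp add: algebra_simps)
qed

text \<open>Bernstein's choice of the Chernoff parameter l for the upper tail of a mean of
  [0,1/2]-valued variables with mean \<mu>; it is optimal up to the term s^3/(2\<mu> + s)^2.\<close>
lemma bernstein_rate_bound:
  fixes L \<mu> :: real
  assumes L: "0 < L" and \<mu>: "0 \<le> \<mu>"
  defines "s \<equiv> L + sqrt (2 * \<mu> * L)"
  defines "l \<equiv> 2 * s / (2 * \<mu> + s)"
  shows "0 < l" and "l \<le> 2" and "L \<le> l * s - l\<^sup>2 * \<mu> / 2"
proof -
  define q where "q = sqrt (2 * \<mu> * L)"
  have q: "0 \<le> q" "q\<^sup>2 = 2 * \<mu> * L" using L \<mu> by (auto simp: q_def)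
  have s_eq: "s = L + q" by (simp add: s_def q_def)
  then have s: "0 < s" using L q by simp
  define T where "T = 2 * \<mu> + s"
  have T: "0 < T" using s \<mu> by (simp add: T_def)
  have l: "l = 2 * s / T" by (simp add: l_def T_def)
  show "0 < l" using s T by (simp add: l)
  show "l \<le> 2" using s T \<mu> by (simp add: l T_def divide_le_eq)
  have "l * s - l\<^sup>2 * \<mu> / 2 - s\<^sup>2 / T = s\<^sup>2 * (T - 2 * \<mu>) / T\<^sup>2"
    using T unfolding l by (simp add: field_simps power2_eq_square)
  then have remainder: "s\<^sup>2 / T = l * s - l\<^sup>2 * \<mu> / 2 - s ^ 3 / T\<^sup>2"
    by (simp add: T_def power2_eq_square power3_eq_cube)
  have "s\<^sup>2 - L * T = L * q"
    using q by (simp add: s_eq T_def power2_eq_square algebra_simps)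
  then have "L * T \<le> s\<^sup>2" using mult_nonneg_nonneg[of L q] L q by linarith
  then have "L \<le> s\<^sup>2 / T" using T by (simp add: le_divide_eq)
  also have "\<dots> \<le> l * s - l\<^sup>2 * \<mu> / 2" using remainder s T by simp
  finally show "L \<le> l * s - l\<^sup>2 * \<mu> / 2" .
qed

lemma sqrt_le_sqrt_add_sqrt_of_less:
  fixes \<mu> L w :: real
  assumes "0 \<le> \<mu>" "0 \<le> L" "w < \<mu> + L + sqrt (2 * \<mu> * L)"
  shows "sqrt w \<le> sqrt \<mu> + sqrt L"
proof -
  have "sqrt 2 \<le> (2::real)" using real_sqrt_le_iff[of 2 4] by simp
  then have "sqrt (2 * \<mu> * L) \<le> 2 * (sqrt \<mu> * sqrt L)"
    using assms by (simp add: real_sqrt_mult mult.assoc mult_right_mono)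
  also have "\<dots> = (sqrt \<mu> + sqrt L)\<^sup>2 - \<mu> - L"
    using assms by (simp add: power2_sum)
  finally have "w \<le> (sqrt \<mu> + sqrt L)\<^sup>2" using assms by linarith
  then have "sqrt w \<le> sqrt ((sqrt \<mu> + sqrt L)\<^sup>2)" by (rule real_sqrt_le_mono)
  then show ?thesis using assms by simp
qed

lemma sqrt_le_sqrt_add_sqrt_of_greater:
  fixes \<mu> L w :: real
  assumes "0 \<le> \<mu>" "0 \<le> L" "0 \<le> w" "\<mu> - sqrt (\<mu> * L) < w"
  shows "sqrt \<mu> \<le> sqrt w + sqrt L"
proof (cases "\<mu> \<le> L")
  case True
  then show ?thesis using assms by (simp add: add_increasing)
next
  case False
  then have "sqrt L * sqrt L \<le> sqrt \<mu> * sqrt L"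
    using assms by (intro mult_right_mono) auto
  then have "(sqrt \<mu> - sqrt L)\<^sup>2 \<le> \<mu> - sqrt (\<mu> * L)"
    using assms by (simp add: power2_diff real_sqrt_mult mult.commute)
  then have "sqrt \<mu> - sqrt L \<le> sqrt w"
    using assms by (intro real_le_rsqrt) simp
  then show ?thesis by simp
qed

section \<open>Moment generating functions and Chernoff bounds\<close>

lemma (in prob_space) integrable_exp_mult_of_bounded:
  fixes f :: "'a \<Rightarrow> real"
  assumes "f \<in> borel_measurable M" and "\<And>x. x \<in> space M \<Longrightarrow> \<bar>f x\<bar> \<le> B"
  shows "integrable M (\<lambda>x. exp (c * f x))"
proof (rule integrable_const_bound[where B = "exp (\<bar>c\<bar> * B)"])
  show "AE x in M. norm (exp (c * f x)) \<le> exp (\<bar>c\<bar> * B)"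
  proof (rule AE_I2)
    fix x assume "x \<in> space M"
    have "c * f x \<le> \<bar>c\<bar> * \<bar>f x\<bar>" by (metis abs_ge_self abs_mult)
    also have "\<dots> \<le> \<bar>c\<bar> * B" using assms(2)[OF \<open>x \<in> space M\<close>] by (intro mult_left_mono) auto
    finally show "norm (exp (c * f x)) \<le> exp (\<bar>c\<bar> * B)" by simp
  qed
qed (use assms(1) in simp)

lemma (in prob_space) expectation_exp_sum_indep_le:
  fixes Y :: "'i \<Rightarrow> 'a \<Rightarrow> real"
  assumes "finite I"
    and indep: "indep_vars (\<lambda>_. borel) Y I"
    and range: "\<And>i \<omega>. i \<in> I \<Longrightarrow> \<omega> \<in> space M \<Longrightarrow> Y i \<omega> \<in> S"
    and bounded: "\<And>y. y \<in> S \<Longrightarrow> \<bar>y\<bar> \<le> B"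
    and mean: "\<And>i. i \<in> I \<Longrightarrow> expectation (Y i) = \<mu>"
    and linear_bound: "\<And>y. y \<in> S \<Longrightarrow> exp (c * y) \<le> 1 + a * y"
  shows "expectation (\<lambda>\<omega>. exp (c * (\<Sum>i\<in>I. Y i \<omega>))) \<le> exp (real (card I) * a * \<mu>)"
proof -
  have Y_measurable: "Y i \<in> borel_measurable M" if "i \<in> I" for i
    using indep that unfolding indep_vars_def by auto
  have Y_bounded: "\<bar>Y i \<omega>\<bar> \<le> B" if "i \<in> I" "\<omega> \<in> space M" for i \<omega>
    using bounded range that by blast
  have integrable_Y: "integrable M (Y i)" if "i \<in> I" for i
    using Y_measurable Y_bounded that by (intro integrable_const_bound[where B = B]) auto
  have integrable_exp: "integrable M (\<lambda>\<omega>. exp (c * Y i \<omega>))" if "i \<in> I" for i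
    using Y_measurable Y_bounded that by (intro integrable_exp_mult_of_bounded) auto
  have "expectation (\<lambda>\<omega>. exp (c * (\<Sum>i\<in>I. Y i \<omega>))) = expectation (\<lambda>\<omega>. \<Prod>i\<in>I. exp (c * Y i \<omega>))"
    by (simp add: sum_distrib_left exp_sum \<open>finite I\<close>)
  also have "\<dots> = (\<Prod>i\<in>I. expectation (\<lambda>\<omega>. exp (c * Y i \<omega>)))"
    by (intro indep_vars_lebesgue_integral \<open>finite I\<close> integrable_exp
        indep_vars_compose2[OF indep]) auto
  also have "\<dots> \<le> (\<Prod>i\<in>I. exp (a * \<mu>))"
  proof (rule prod_mono)
    fix i assume i: "i \<in> I"
    have "expectation (\<lambda>\<omega>. exp (c * Y i \<omega>)) \<le> expectation (\<lambda>\<omega>. 1 + a * Y i \<omega>)"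
      using i integrable_exp integrable_Y linear_bound range by (intro integral_mono) auto
    also have "\<dots> = 1 + a * \<mu>" using i integrable_Y mean by (simp add: prob_space)
    also have "\<dots> \<le> exp (a * \<mu>)" by simp
    finally show "0 \<le> expectation (\<lambda>\<omega>. exp (c * Y i \<omega>))
        \<and> expectation (\<lambda>\<omega>. exp (c * Y i \<omega>)) \<le> exp (a * \<mu>)"
      by simp
  qed
  also have "\<dots> = exp (real (card I) * a * \<mu>)"
    by (simp add: exp_of_nat_mult[symmetric] mult.assoc)
  finally show ?thesis .
qed

text \<open>Jensen's inequality for the convex function exp.\<close>
lemma (in prob_space) expectation_exp_average_le:
  fixes S :: "'p \<Rightarrow> 'a \<Rightarrow> real"
  assumes "finite P" "P \<noteq> {}"
    and measurable: "\<And>p. p \<in> P \<Longrightarrow> S p \<in> borel_measurable M"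
    and bounded: "\<And>p \<omega>. p \<in> P \<Longrightarrow> \<omega> \<in> space M \<Longrightarrow> \<bar>S p \<omega>\<bar> \<le> D"
    and mgf: "\<And>p. p \<in> P \<Longrightarrow> expectation (\<lambda>\<omega>. exp (c * S p \<omega>)) \<le> B"
  defines "A \<equiv> \<lambda>\<omega>. (\<Sum>p\<in>P. S p \<omega>) / real (card P)"
  shows "expectation (\<lambda>\<omega>. exp (c * A \<omega>)) \<le> B"
    and "integrable M (\<lambda>\<omega>. exp (c * A \<omega>))"
proof -
  have card_pos: "0 < real (card P)" using assms(1,2) by (simp add: card_gt_0_iff)
  have integrable_S: "integrable M (\<lambda>\<omega>. exp (c * S p \<omega>))" if "p \<in> P" for p
    using that measurable bounded by (intro integrable_exp_mult_of_bounded) auto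
  have jensen: "exp (c * A \<omega>) \<le> (\<Sum>p\<in>P. exp (c * S p \<omega>)) / real (card P)" for \<omega>
  proof -
    have "exp (\<Sum>p\<in>P. (1 / real (card P)) *\<^sub>R (c * S p \<omega>))
        \<le> (\<Sum>p\<in>P. (1 / real (card P)) * exp (c * S p \<omega>))"
      using card_pos by (intro convex_on_sum[OF assms(1,2) exp_convex]) auto
    then show ?thesis
      by (simp add: A_def sum_distrib_left sum_divide_distrib)
  qed
  have integrable_mean: "integrable M (\<lambda>\<omega>. (\<Sum>p\<in>P. exp (c * S p \<omega>)) / real (card P))"
    using integrable_S by auto
  show integrable_A: "integrable M (\<lambda>\<omega>. exp (c * A \<omega>))"
    using jensen measurable unfolding A_def
    by (intro Bochner_Integration.integrable_bound[OF integrable_mean])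
      (auto intro!: AE_I2 order_trans[OF jensen]
        simp: A_def sum_nonneg simp del: times_divide_eq_right)
  have "expectation (\<lambda>\<omega>. exp (c * A \<omega>))
      \<le> expectation (\<lambda>\<omega>. (\<Sum>p\<in>P. exp (c * S p \<omega>)) / real (card P))"
    by (rule integral_mono[OF integrable_A integrable_mean jensen])
  also have "\<dots> = (\<Sum>p\<in>P. expectation (\<lambda>\<omega>. exp (c * S p \<omega>))) / real (card P)"
    using integrable_S by (simp add: Bochner_Integration.integral_sum)
  also have "\<dots> \<le> (\<Sum>p\<in>P. B) / real (card P)"
    using mgf card_pos by (intro divide_right_mono sum_mono) auto
  also have "\<dots> = B" using card_pos by simp
  finally show "expectation (\<lambda>\<omega>. exp (c * A \<omega>)) \<le> B" .
qed

lemma (in prob_space) Chernoff_ineq_ge_space: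
  fixes f :: "'a \<Rightarrow> real"
  assumes "0 < s" and "integrable M (\<lambda>x. exp (s * f x))"
  shows "prob {x\<in>space M. a \<le> f x} \<le> exp (- s * a) * expectation (\<lambda>x. exp (s * f x))"
proof -
  have "set_integrable M (space M) (\<lambda>x. exp (s * f x))"
    unfolding set_integrable_def
    by (rule Bochner_Integration.integrable_cong[THEN iffD1, OF refl _ assms(2)]) simp
  from Chernoff_ineq_ge[OF assms(1) this sets.top] show ?thesis
    using set_integral_space[OF assms(2)] by simp
qed

lemma (in prob_space) Chernoff_ineq_le_space:
  fixes f :: "'a \<Rightarrow> real"
  assumes "0 < s" and "integrable M (\<lambda>x. exp (- s * f x))"
  shows "prob {x\<in>space M. f x \<le> a} \<le> exp (s * a) * expectation (\<lambda>x. exp (- s * f x))"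
proof -
  have "set_integrable M (space M) (\<lambda>x. exp (- s * f x))"
    unfolding set_integrable_def
    by (rule Bochner_Integration.integrable_cong[THEN iffD1, OF refl _ assms(2)]) simp
  from Chernoff_ineq_le[OF assms(1) this sets.top] show ?thesis
    using set_integral_space[OF assms(2)] by simp
qed

lemma (in prob_space) prob_ge_one_minus_of_compl:
  assumes "A \<in> events" "prob A \<le> \<delta>" "B \<in> events" "space M - A \<subseteq> B"
  shows "1 - \<delta> \<le> prob B"
  using prob_compl[OF assms(1)] finite_measure_mono[OF assms(4,3)] assms(2) by simp

section \<open>Concentration of averages of independent block means\<close>

locale block_means = prob_space +
  fixes P :: "'p set" and k :: nat and Y :: "'p \<Rightarrow> nat \<Rightarrow> 'a \<Rightarrow> real" and \<mu> :: real
    and W :: "'a \<Rightarrow> real"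
  assumes finite_P: "finite P" and P_nonempty: "P \<noteq> {}" and k_pos: "0 < k"
    and indep: "\<And>p. p \<in> P \<Longrightarrow> indep_vars (\<lambda>_. borel) (Y p) {..<k}"
    and range: "\<And>p j \<omega>. p \<in> P \<Longrightarrow> j < k \<Longrightarrow> \<omega> \<in> space M \<Longrightarrow> Y p j \<omega> \<in> {0..1/2}"
    and mean: "\<And>p j. p \<in> P \<Longrightarrow> j < k \<Longrightarrow> expectation (Y p j) = \<mu>"
    and W_eq: "\<And>\<omega>. \<omega> \<in> space M \<Longrightarrow> W \<omega> = (\<Sum>p\<in>P. \<Sum>j<k. Y p j \<omega>) / (real (card P) * real k)"
    and W_measurable: "W \<in> borel_measurable M"
begin

lemma mean_nonneg: "0 \<le> \<mu>"
proof -
  obtain p where "p \<in> P" using P_nonempty by blast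
  then show ?thesis
    using mean[of p 0] range[of p 0] k_pos by (auto intro!: integral_nonneg_AE AE_I2)
qed

lemma W_nonneg: "\<omega> \<in> space M \<Longrightarrow> 0 \<le> W \<omega>"
  using range by (auto simp: W_eq intro!: divide_nonneg_nonneg sum_nonneg)

lemma expectation_exp_W_le:
  assumes linear_bound: "\<And>y. y \<in> {0..1/2} \<Longrightarrow> exp (c * y) \<le> 1 + a * y"
  shows "expectation (\<lambda>\<omega>. exp (c * real k * W \<omega>)) \<le> exp (real k * a * \<mu>)"
    and "integrable M (\<lambda>\<omega>. exp (c * real k * W \<omega>))"
proof -
  define S where "S p \<omega> = (\<Sum>j<k. Y p j \<omega>)" for p \<omega>
  have W: "exp (c * real k * W \<omega>) = exp (c * ((\<Sum>p\<in>P. S p \<omega>) / real (card P)))"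
    if "\<omega> \<in> space M" for \<omega>
    using W_eq[OF that] k_pos by (simp add: S_def)
  have S_measurable: "S p \<in> borel_measurable M" if "p \<in> P" for p
    using indep[OF that] unfolding S_def indep_vars_def by (auto intro!: borel_measurable_sum)
  have S_bounded: "\<bar>S p \<omega>\<bar> \<le> real k" if "p \<in> P" "\<omega> \<in> space M" for p \<omega>
  proof -
    have "\<bar>S p \<omega>\<bar> \<le> (\<Sum>j<k. \<bar>Y p j \<omega>\<bar>)" unfolding S_def by (rule sum_abs)
    also have "\<dots> \<le> (\<Sum>j<k. 1)" using range[OF that(1) _ that(2)] by (intro sum_mono) fastforce
    finally show ?thesis by simp
  qed
  have S_mgf: "expectation (\<lambda>\<omega>. exp (c * S p \<omega>)) \<le> exp (real k * a * \<mu>)" if "p \<in> P" for p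
    using expectation_exp_sum_indep_le[of "{..<k}" "Y p" "{0..1/2}" "1/2" \<mu> c a]
      indep range mean linear_bound that by (auto simp: S_def)
  note average = expectation_exp_average_le[OF finite_P P_nonempty S_measurable S_bounded S_mgf]
  show "integrable M (\<lambda>\<omega>. exp (c * real k * W \<omega>))"
    using average(2) by (rule Bochner_Integration.integrable_cong[THEN iffD1, rotated 2]) (auto simp: W)
  have "expectation (\<lambda>\<omega>. exp (c * real k * W \<omega>))
      = expectation (\<lambda>\<omega>. exp (c * ((\<Sum>p\<in>P. S p \<omega>) / real (card P))))"
    by (rule Bochner_Integration.integral_cong) (auto simp: W)
  also have "\<dots> \<le> exp (real k * a * \<mu>)" by (rule average(1))
  finally show "expectation (\<lambda>\<omega>. exp (c * real k * W \<omega>)) \<le> exp (real k * a * \<mu>)" .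
qed

lemma prob_upper_tail:
  assumes "0 < L"
  shows "prob {\<omega>\<in>space M. \<mu> + (L + sqrt (2 * \<mu> * L)) \<le> W \<omega>} \<le> exp (- real k * L)"
proof -
  define s where "s = L + sqrt (2 * \<mu> * L)"
  define l where "l = 2 * s / (2 * \<mu> + s)"
  note rate = bernstein_rate_bound[OF assms mean_nonneg, folded s_def, folded l_def]
  have "exp (l * y) \<le> 1 + (l + l\<^sup>2 / 2) * y" if "y \<in> {0..1/2}" for y
    using exp_le_on_half_interval rate that by auto
  note mgf = expectation_exp_W_le[OF this]
  have "prob {\<omega>\<in>space M. \<mu> + s \<le> W \<omega>}
      \<le> exp (- (l * real k) * (\<mu> + s)) * expectation (\<lambda>\<omega>. exp (l * real k * W \<omega>))"
    using rate k_pos mgf(2) by (intro Chernoff_ineq_ge_space) auto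
  also have "\<dots> \<le> exp (- (l * real k) * (\<mu> + s)) * exp (real k * (l + l\<^sup>2 / 2) * \<mu>)"
    using mgf(1) by (intro mult_left_mono) auto
  also have "\<dots> = exp (- real k * (l * s - l\<^sup>2 * \<mu> / 2))"
    by (simp add: exp_add[symmetric] algebra_simps power2_eq_square)
  also have "\<dots> \<le> exp (- real k * L)"
    using rate by (simp add: mult_left_mono)
  finally show ?thesis by (simp add: s_def)
qed

lemma prob_lower_tail:
  assumes "0 < L" "0 < \<mu>"
  shows "prob {\<omega>\<in>space M. W \<omega> \<le> \<mu> - sqrt (\<mu> * L)} \<le> exp (- real k * L)"
proof -
  define s where "s = sqrt (\<mu> * L)"
  have s: "0 < s" "s\<^sup>2 = \<mu> * L" using assms by (auto simp: s_def)
  \<comment> \<open>maximises the exponent l s - l^2 \<mu> / 4\<close>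
  define l where "l = 2 * s / \<mu>"
  have l: "0 < l" using s assms by (simp add: l_def)
  have "exp (- l * y) \<le> 1 + (- l + l\<^sup>2 / 4) * y" if "y \<in> {0..1/2}" for y
    using exp_minus_le_on_half_interval l that by auto
  note mgf = expectation_exp_W_le[OF this]
  have "prob {\<omega>\<in>space M. W \<omega> \<le> \<mu> - s}
      \<le> exp (l * real k * (\<mu> - s)) * expectation (\<lambda>\<omega>. exp (- (l * real k) * W \<omega>))"
    using l k_pos mgf(2) by (intro Chernoff_ineq_le_space) auto
  also have "\<dots> \<le> exp (l * real k * (\<mu> - s)) * exp (real k * (- l + l\<^sup>2 / 4) * \<mu>)"
    using mgf(1) by (intro mult_left_mono) auto
  also have "\<dots> = exp (- real k * (l * s - l\<^sup>2 * \<mu> / 4))"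
    by (simp add: exp_add[symmetric] algebra_simps power2_eq_square)
  also have "l * s - l\<^sup>2 * \<mu> / 4 = L"
    using assms s unfolding l_def by (simp add: field_simps power2_eq_square)
  finally show ?thesis by (simp add: s_def)
qed

lemma prob_sqrt_upper:
  assumes "0 < L" "1 \<le> c"
  shows "1 - exp (- real k * L) \<le> prob {\<omega>\<in>space M. sqrt (W \<omega>) \<le> sqrt \<mu> + c * sqrt L}"
proof (rule prob_ge_one_minus_of_compl)
  show "space M - {\<omega>\<in>space M. \<mu> + (L + sqrt (2 * \<mu> * L)) \<le> W \<omega>}
      \<subseteq> {\<omega>\<in>space M. sqrt (W \<omega>) \<le> sqrt \<mu> + c * sqrt L}"
  proof safe
    fix \<omega> assume "\<omega> \<in> space M" "\<not> \<mu> + (L + sqrt (2 * \<mu> * L)) \<le> W \<omega>"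
    then have "sqrt (W \<omega>) \<le> sqrt \<mu> + sqrt L"
      using assms mean_nonneg by (intro sqrt_le_sqrt_add_sqrt_of_less) auto
    also have "sqrt L \<le> c * sqrt L" using assms mult_right_mono[of 1 c "sqrt L"] by simp
    finally show "sqrt (W \<omega>) \<le> sqrt \<mu> + c * sqrt L" by simp
  qed
qed (use prob_upper_tail[OF assms(1)] W_measurable in measurable)

lemma prob_sqrt_lower:
  assumes "0 < L" "1 \<le> c"
  shows "1 - exp (- real k * L) \<le> prob {\<omega>\<in>space M. sqrt \<mu> \<le> sqrt (W \<omega>) + c * sqrt L}"
proof (cases "\<mu> = 0")
  case True
  then have "{\<omega>\<in>space M. sqrt \<mu> \<le> sqrt (W \<omega>) + c * sqrt L} = space M"
    using assms W_nonneg by (auto intro!: add_nonneg_nonneg)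
  then show ?thesis by (simp add: prob_space)
next
  case False
  then have "0 < \<mu>" using mean_nonneg by simp
  show ?thesis
  proof (rule prob_ge_one_minus_of_compl)
    show "space M - {\<omega>\<in>space M. W \<omega> \<le> \<mu> - sqrt (\<mu> * L)}
        \<subseteq> {\<omega>\<in>space M. sqrt \<mu> \<le> sqrt (W \<omega>) + c * sqrt L}"
    proof safe
      fix \<omega> assume "\<omega> \<in> space M" "\<not> W \<omega> \<le> \<mu> - sqrt (\<mu> * L)"
      then have "sqrt \<mu> \<le> sqrt (W \<omega>) + sqrt L"
        using assms mean_nonneg W_nonneg by (intro sqrt_le_sqrt_add_sqrt_of_greater) auto
      also have "sqrt L \<le> c * sqrt L" using assms mult_right_mono[of 1 c "sqrt L"] by simp
      finally show "sqrt \<mu> \<le> sqrt (W \<omega>) + c * sqrt L" by simp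
    qed
  qed (use prob_lower_tail[OF assms(1) \<open>0 < \<mu>\<close>] W_measurable in measurable)
qed

end

section \<open>Hoeffding's representation of U-statistics\<close>

lemma exists_permutes_image:
  assumes "finite U" "B \<subseteq> U" "B' \<subseteq> U" "card B = card B'"
  shows "\<exists>\<tau>. \<tau> permutes U \<and> \<tau> ` B = B'"
proof -
  have fin: "finite B" "finite B'" using assms finite_subset by auto
  obtain f where f: "bij_betw f B B'" using finite_same_card_bij[OF fin assms(4)] by blast
  have "finite (U - B)" "finite (U - B')" "card (U - B) = card (U - B')"
    using assms fin by (simp_all add: card_Diff_subset)
  then obtain g where g: "bij_betw g (U - B) (U - B')" by (metis finite_same_card_bij)
  define \<tau> where "\<tau> x = (if x \<in> B then f x else if x \<in> U then g x else x)" for x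
  have \<tau>B: "bij_betw \<tau> B B'"
    using f by (rule bij_betw_cong[THEN iffD1, rotated]) (simp add: \<tau>_def)
  have "bij_betw \<tau> (U - B) (U - B')"
    using g by (rule bij_betw_cong[THEN iffD1, rotated]) (simp add: \<tau>_def)
  with \<tau>B have "bij_betw \<tau> (B \<union> (U - B)) (B' \<union> (U - B'))"
    by (rule bij_betw_combine) blast
  moreover have "B \<union> (U - B) = U" "B' \<union> (U - B') = U" using assms by blast+
  ultimately have "bij_betw \<tau> U U" by simp
  moreover have "\<tau> x = x" if "x \<notin> U" for x using that assms(2) by (auto simp: \<tau>_def)
  ultimately have "\<tau> permutes U" by (rule bij_imp_permutes)
  moreover have "\<tau> ` B = B'" using \<tau>B by (simp add: bij_betw_def)
  ultimately show ?thesis by blast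
qed

lemma image_permutes_subset_card:
  assumes "p permutes U" "K \<subseteq> U"
  shows "p ` K \<subseteq> U" and "card (p ` K) = card K"
  using assms by (auto simp: permutes_in_image card_image permutes_inj_on inj_on_subset)

lemma bij_betw_image_permutes_subsets:
  assumes p: "p permutes U"
  shows "bij_betw (image p) {K. K \<subseteq> U \<and> card K = q} {K. K \<subseteq> U \<and> card K = q}"
proof (rule bij_betw_byWitness[where f' = "image (inv p)"])
  have "inj p" "surj p" using p permutes_inj permutes_surj by blast+
  then show "\<forall>K\<in>{K. K \<subseteq> U \<and> card K = q}. inv p ` p ` K = K"
    and "\<forall>K\<in>{K. K \<subseteq> U \<and> card K = q}. p ` inv p ` K = K"
    by (simp_all add: image_inv_f_f image_f_inv_f)
  show "image p ` {K. K \<subseteq> U \<and> card K = q} \<subseteq> {K. K \<subseteq> U \<and> card K = q}"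
    and "image (inv p) ` {K. K \<subseteq> U \<and> card K = q} \<subseteq> {K. K \<subseteq> U \<and> card K = q}"
    using image_permutes_subset_card[OF p] image_permutes_subset_card[OF permutes_inv[OF p]]
    by blast+
qed

lemma sum_permutes_image_eq_sum_subsets:
  fixes F :: "nat set \<Rightarrow> real"
  assumes "B \<subseteq> {..<n}" "card B = q"
  shows "real (n choose q) * (\<Sum>\<pi> | \<pi> permutes {..<n}. F (\<pi> ` B))
       = fact n * (\<Sum>K | K \<subseteq> {..<n} \<and> card K = q. F K)"
proof -
  define S where "S = {K. K \<subseteq> {..<n} \<and> card K = q}"
  define Perm where "Perm = {\<pi>. \<pi> permutes {..<n}}"
  have card_S: "card S = n choose q" unfolding S_def using n_subsets[of "{..<n}" q] by simp
  have card_Perm: "card Perm = fact n" unfolding Perm_def by (rule card_permutations) auto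
  have independent: "(\<Sum>\<pi>\<in>Perm. F (\<pi> ` B')) = (\<Sum>\<pi>\<in>Perm. F (\<pi> ` B))" if B': "B' \<in> S" for B'
  proof -
    obtain \<tau> where \<tau>: "\<tau> permutes {..<n}" "\<tau> ` B = B'"
      using exists_permutes_image[of "{..<n}" B B'] assms B' by (auto simp: S_def)
    have "(\<Sum>\<pi>\<in>Perm. F (\<pi> ` B)) = (\<Sum>\<pi>\<in>Perm. F ((\<pi> \<circ> \<tau>) ` B))"
      unfolding Perm_def by (rule sum_permutations_compose_right[OF \<tau>(1)])
    then show ?thesis by (simp add: image_image \<tau>(2)[symmetric])
  qed
  have reindex: "(\<Sum>B'\<in>S. F (\<pi> ` B')) = (\<Sum>K\<in>S. F K)" if "\<pi> \<in> Perm" for \<pi>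
    using that unfolding S_def Perm_def
    by (intro sum.reindex_bij_betw bij_betw_image_permutes_subsets) simp
  have "real (card S) * (\<Sum>\<pi>\<in>Perm. F (\<pi> ` B)) = (\<Sum>B'\<in>S. \<Sum>\<pi>\<in>Perm. F (\<pi> ` B'))"
    using sum.cong[OF refl independent, of S] by simp
  also have "\<dots> = (\<Sum>\<pi>\<in>Perm. \<Sum>B'\<in>S. F (\<pi> ` B'))" by (rule sum.swap)
  also have "\<dots> = real (card Perm) * (\<Sum>K\<in>S. F K)" using reindex by simp
  finally show ?thesis unfolding card_S card_Perm by (simp add: S_def Perm_def)
qed

lemma block_index_less:
  fixes q j k n i :: nat
  assumes "j < k" "i < q" "q * k \<le> n"
  shows "q * j + i < n"
proof -
  have "q * j + i < q * Suc j" using assms(2) by simp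
  also have "\<dots> \<le> q * k" using assms(1) by (intro mult_le_mono2) simp
  finally show ?thesis using assms(3) by simp
qed

lemma block_index_eq_iff:
  fixes q j j' i i' :: nat
  assumes "i < q" "i' < q"
  shows "q * j + i = q * j' + i' \<longleftrightarrow> j = j' \<and> i = i'"
proof
  assume eq: "q * j + i = q * j' + i'"
  have "j = (q * j + i) div q" using assms by simp
  also have "\<dots> = (q * j' + i') div q" by (simp only: eq)
  also have "\<dots> = j'" using assms by simp
  finally show "j = j' \<and> i = i'" using eq by simp
qed simp

lemma inj_on_block:
  fixes q j :: nat
  assumes "inj \<pi>"
  shows "inj_on (\<lambda>i. \<pi> (q * j + i)) A"
proof (rule inj_onI)
  fix x y assume "\<pi> (q * j + x) = \<pi> (q * j + y)"
  then have "q * j + x = q * j + y" by (rule injD[OF assms])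
  then show "x = y" by simp
qed

lemma invariant_apply_bij_eq_sorted:
  fixes G :: "(nat \<Rightarrow> nat) \<Rightarrow> real"
  assumes local: "\<And>t t'. (\<And>i. i < q \<Longrightarrow> t i = t' i) \<Longrightarrow> G t = G t'"
    and invariant: "\<And>t \<rho>. \<rho> permutes {..<q} \<Longrightarrow> G (t \<circ> \<rho>) = G t"
    and K: "finite K" "card K = q" and t: "bij_betw t {..<q} K"
  shows "G t = G (\<lambda>i. sorted_list_of_set K ! i)"
proof -
  define xs where "xs = sorted_list_of_set K"
  have xs: "bij_betw ((!) xs) {..<q} K"
    by (rule bij_betw_nth) (use K in \<open>auto simp: xs_def\<close>)
  define \<rho> where "\<rho> i = (if i < q then the_inv_into {..<q} ((!) xs) (t i) else i)" for i
  have "bij_betw (the_inv_into {..<q} ((!) xs) \<circ> t) {..<q} {..<q}"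
    by (rule bij_betw_trans[OF t bij_betw_the_inv_into[OF xs]])
  then have "bij_betw \<rho> {..<q} {..<q}"
    by (rule bij_betw_cong[THEN iffD1, rotated]) (simp add: \<rho>_def)
  then have \<rho>: "\<rho> permutes {..<q}" by (rule bij_imp_permutes) (simp add: \<rho>_def)
  have "G t = G ((!) xs \<circ> \<rho>)"
  proof (rule local)
    fix i assume "i < q"
    moreover have "t i \<in> K" using t \<open>i < q\<close> by (auto simp: bij_betw_def)
    ultimately show "t i = ((!) xs \<circ> \<rho>) i"
      using f_the_inv_into_f_bij_betw[OF xs] by (simp add: \<rho>_def)
  qed
  also have "\<dots> = G ((!) xs)" by (rule invariant[OF \<rho>])
  finally show ?thesis by (simp add: xs_def)
qed

lemma average_subsets_eq_average_permutes_blocks: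
  fixes G :: "(nat \<Rightarrow> nat) \<Rightarrow> real"
  assumes local: "\<And>t t'. (\<And>i. i < q \<Longrightarrow> t i = t' i) \<Longrightarrow> G t = G t'"
    and invariant: "\<And>t \<rho>. \<rho> permutes {..<q} \<Longrightarrow> G (t \<circ> \<rho>) = G t"
    and "0 < k" "q * k \<le> n"
  shows "(\<Sum>K | K \<subseteq> {..<n} \<and> card K = q. G (\<lambda>i. sorted_list_of_set K ! i)) / real (n choose q)
       = (\<Sum>\<pi> | \<pi> permutes {..<n}. \<Sum>j<k. G (\<lambda>i. \<pi> (q * j + i))) / (fact n * real k)"
proof -
  define S where "S = (\<Sum>K | K \<subseteq> {..<n} \<and> card K = q. G (\<lambda>i. sorted_list_of_set K ! i))"
  have "q \<le> q * k" using \<open>0 < k\<close> by simp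
  then have "q \<le> n" using \<open>q * k \<le> n\<close> by (rule order_trans)
  then have binom_pos: "0 < real (n choose q)" by simp
  have block: "(\<Sum>\<pi> | \<pi> permutes {..<n}. G (\<lambda>i. \<pi> (q * j + i))) = fact n * S / real (n choose q)"
    if "j < k" for j
  proof -
    define B where "B = (\<lambda>i. q * j + i) ` {..<q}"
    have B: "B \<subseteq> {..<n}" "card B = q"
      using block_index_less[OF that _ assms(4)] by (auto simp: B_def card_image inj_on_def)
    have "G (\<lambda>i. \<pi> (q * j + i)) = G (\<lambda>i. sorted_list_of_set (\<pi> ` B) ! i)"
      if "\<pi> permutes {..<n}" for \<pi>
    proof (rule invariant_apply_bij_eq_sorted[OF local invariant])
      have "inj \<pi>" using that by (rule permutes_inj)
      then show "card (\<pi> ` B) = q" using B by (simp add: card_image inj_on_subset)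
      show "finite (\<pi> ` B)" by (simp add: B_def)
      show "bij_betw (\<lambda>i. \<pi> (q * j + i)) {..<q} (\<pi> ` B)"
        unfolding bij_betw_def
      proof
        show "inj_on (\<lambda>i. \<pi> (q * j + i)) {..<q}" using \<open>inj \<pi>\<close> by (rule inj_on_block)
        show "(\<lambda>i. \<pi> (q * j + i)) ` {..<q} = \<pi> ` B" by (simp add: B_def image_image)
      qed
    qed
    then have "real (n choose q) * (\<Sum>\<pi> | \<pi> permutes {..<n}. G (\<lambda>i. \<pi> (q * j + i))) = fact n * S"
      using sum_permutes_image_eq_sum_subsets[OF B] by (simp add: S_def)
    then show ?thesis using binom_pos by (simp add: field_simps)
  qed
  have "(\<Sum>\<pi> | \<pi> permutes {..<n}. \<Sum>j<k. G (\<lambda>i. \<pi> (q * j + i)))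
      = (\<Sum>j<k. \<Sum>\<pi> | \<pi> permutes {..<n}. G (\<lambda>i. \<pi> (q * j + i)))"
    by (rule sum.swap)
  also have "\<dots> = real k * (fact n * S / real (n choose q))"
    using block by simp
  finally show ?thesis
    using binom_pos \<open>0 < k\<close> by (simp add: S_def field_simps)
qed

section \<open>The kernels \<eta> and \<eta>\<tilde>\<close>

lemma (in prob_space) expectation_eq_of_distr_eq:
  fixes A C :: "'a \<Rightarrow> 'b::topological_space" and f :: "'b \<Rightarrow> real"
  assumes "random_variable borel A" "random_variable borel C" "f \<in> borel_measurable borel"
    and "distr M borel A = distr M borel C"
  shows "expectation (\<lambda>\<omega>. f (A \<omega>)) = expectation (\<lambda>\<omega>. f (C \<omega>))"
  using integral_distr[OF assms(1,3)] integral_distr[OF assms(2,3)] assms(4) by simp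

lemma (in prob_space) expectation_half_sq_diff_eq_variance:
  fixes A B C :: "'a \<Rightarrow> real"
  assumes indep: "indep_var borel A borel B" and C: "random_variable borel C"
    and bounded: "\<And>\<omega>. \<omega> \<in> space M \<Longrightarrow> \<bar>A \<omega>\<bar> \<le> c \<and> \<bar>B \<omega>\<bar> \<le> c \<and> \<bar>C \<omega>\<bar> \<le> c"
    and distr_A: "distr M borel A = distr M borel C" and distr_B: "distr M borel B = distr M borel C"
  shows "expectation (\<lambda>\<omega>. (A \<omega> - B \<omega>)\<^sup>2 / 2) = variance C"
proof -
  have rv: "random_variable borel A" "random_variable borel B"
    using indep by (blast dest: indep_var_rv1 indep_var_rv2)+
  have sq_bounded: "\<bar>x\<^sup>2\<bar> \<le> c\<^sup>2" if "\<bar>x\<bar> \<le> c" for x :: real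
    using power_mono[OF that abs_ge_zero, of 2] by simp
  have integrable: "integrable M (\<lambda>\<omega>. A \<omega>)" "integrable M (\<lambda>\<omega>. B \<omega>)" "integrable M (\<lambda>\<omega>. C \<omega>)"
    using bounded rv C by (auto intro!: integrable_const_bound[where B = c])
  have integrable_sq: "integrable M (\<lambda>\<omega>. (A \<omega>)\<^sup>2)" "integrable M (\<lambda>\<omega>. (B \<omega>)\<^sup>2)"
    "integrable M (\<lambda>\<omega>. (C \<omega>)\<^sup>2)"
    using bounded sq_bounded rv C
    by (auto intro!: integrable_const_bound[where B = "c\<^sup>2"] borel_measurable_power)
  have same_expectation: "expectation (\<lambda>\<omega>. f (A \<omega>)) = expectation (\<lambda>\<omega>. f (C \<omega>))"
    "expectation (\<lambda>\<omega>. f (B \<omega>)) = expectation (\<lambda>\<omega>. f (C \<omega>))"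
    if "f \<in> borel_measurable borel" for f :: "real \<Rightarrow> real"
    using expectation_eq_of_distr_eq[OF rv(1) C that distr_A]
      expectation_eq_of_distr_eq[OF rv(2) C that distr_B] by auto
  have "(\<lambda>x. x) \<in> borel_measurable (borel :: real measure)"
    "(\<lambda>x. x\<^sup>2) \<in> borel_measurable (borel :: real measure)"
    by (auto intro!: borel_measurable_power measurable_ident_sets)
  note means = same_expectation[OF this(1)] and squares = same_expectation[OF this(2)]
  have "integrable M (\<lambda>\<omega>. A \<omega> * B \<omega>)"
    by (rule indep_var_integrable[OF indep integrable(1,2)])
  then have "expectation (\<lambda>\<omega>. (A \<omega> - B \<omega>)\<^sup>2 / 2)
      = expectation (\<lambda>\<omega>. (A \<omega>)\<^sup>2) / 2 + expectation (\<lambda>\<omega>. (B \<omega>)\<^sup>2) / 2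
        - expectation (\<lambda>\<omega>. A \<omega> * B \<omega>)"
    using integrable integrable_sq by (simp add: power2_diff diff_divide_distrib add_divide_distrib)
  also have "\<dots> = expectation (\<lambda>\<omega>. (C \<omega>)\<^sup>2) - (expectation C)\<^sup>2"
    using indep_var_lebesgue_integral[OF indep integrable(1,2)] means squares
    by (simp add: power2_eq_square)
  also have "\<dots> = variance C"
    using variance_eq[OF integrable(3) integrable_sq(3)] by simp
  finally show ?thesis .
qed

lemma kernel_symmetric_comp:
  fixes g :: "(nat \<Rightarrow> 'x) \<Rightarrow> real"
  assumes "kernel_symmetric r g" and local: "\<And>x y. (\<And>i. i < r \<Longrightarrow> x i = y i) \<Longrightarrow> g x = g y"
    and "\<rho> permutes {..<r}"
  shows "g (x \<circ> \<rho>) = g x"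
proof -
  have "g (x \<circ> \<rho>) = g (restrict (x \<circ> \<rho>) {..<r})" by (rule local) simp
  also have "\<dots> = g (restrict x {..<r})"
    using assms(1,3) unfolding kernel_symmetric_def by blast
  also have "\<dots> = g x" by (rule local) simp
  finally show ?thesis .
qed

lemma eta_cong:
  assumes "\<And>i. i < 2 * m \<Longrightarrow> x i = y i"
  shows "eta m h x = eta m h y"
proof -
  have "restrict x {..<m} = restrict y {..<m}"
    "restrict (\<lambda>i. x (m + i)) {..<m} = restrict (\<lambda>i. y (m + i)) {..<m}"
    using assms by (auto intro!: restrict_ext)
  then show ?thesis by (simp add: eta_def)
qed

lemma eta_range:
  assumes "\<And>x. h x \<in> {0..1}"
  shows "eta m h x \<in> {0..1/2}"
proof -
  have "\<bar>h (restrict x {..<m}) - h (restrict (\<lambda>i. x (m + i)) {..<m})\<bar> \<le> 1"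
    using assms[of "restrict x {..<m}"] assms[of "restrict (\<lambda>i. x (m + i)) {..<m}"] by auto
  then show ?thesis by (auto simp: eta_def abs_square_le_1)
qed

lemma eta_measurable:
  assumes "h \<in> borel_measurable (PiM {..<m} (\<lambda>_. borel))"
  shows "eta m h \<in> borel_measurable (PiM {..<2 * m} (\<lambda>_. borel :: 'x::topological_space measure))"
proof -
  have "(\<lambda>z. restrict z {..<m})
       \<in> measurable (PiM {..<2 * m} (\<lambda>_. borel :: 'x measure)) (PiM {..<m} (\<lambda>_. borel))"
    "(\<lambda>z. restrict (\<lambda>i. z (m + i)) {..<m})
       \<in> measurable (PiM {..<2 * m} (\<lambda>_. borel :: 'x measure)) (PiM {..<m} (\<lambda>_. borel))"
    by (auto intro!: measurable_restrict measurable_component_singleton)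
  from this[THEN measurable_compose, of h] have
    "(\<lambda>z. h (restrict z {..<m})) \<in> borel_measurable (PiM {..<2 * m} (\<lambda>_. borel :: 'x measure))"
    "(\<lambda>z. h (restrict (\<lambda>i. z (m + i)) {..<m})) \<in> borel_measurable (PiM {..<2 * m} (\<lambda>_. borel))"
    using assms by (simp_all add: comp_def)
  then show ?thesis unfolding eta_def[abs_def] by measurable
qed

lemma eta_tilde_cong:
  assumes "\<And>i. i < 2 * m \<Longrightarrow> x i = y i"
  shows "eta_tilde m h x = eta_tilde m h y"
proof -
  have "eta m h (x \<circ> \<pi>) = eta m h (y \<circ> \<pi>)" if "\<pi> permutes {..<2 * m}" for \<pi>
    by (rule eta_cong) (use assms permutes_in_image[OF that] in auto)
  then show ?thesis unfolding eta_tilde_def by (intro arg_cong2[where f = "(*)"] refl sum.cong) auto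
qed

lemma eta_tilde_range:
  assumes "\<And>x. h x \<in> {0..1}"
  shows "eta_tilde m h x \<in> {0..1/2}"
proof -
  let ?P = "{\<pi>. \<pi> permutes {..<2 * m}}"
  have card: "real (card ?P) = fact (2 * m)" using card_permutations[of "{..<2 * m}" "2 * m"] by simp
  have "(\<Sum>\<pi>\<in>?P. eta m h (x \<circ> \<pi>)) \<le> (\<Sum>\<pi>\<in>?P. 1/2)"
    by (rule sum_mono) (use eta_range[where h = h, OF assms] in auto)
  moreover have "0 \<le> (\<Sum>\<pi>\<in>?P. eta m h (x \<circ> \<pi>))"
    by (rule sum_nonneg) (use eta_range[where h = h, OF assms] in auto)
  ultimately show ?thesis using card by (simp add: eta_tilde_def field_simps)
qed

lemma eta_tilde_measurable:
  assumes "h \<in> borel_measurable (PiM {..<m} (\<lambda>_. borel))"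
  shows "eta_tilde m h \<in> borel_measurable (PiM {..<2 * m} (\<lambda>_. borel :: 'x::topological_space measure))"
proof -
  have "(\<lambda>z. eta m h (restrict (z \<circ> \<pi>) {..<2 * m}))
      \<in> borel_measurable (PiM {..<2 * m} (\<lambda>_. borel :: 'x measure))" if "\<pi> permutes {..<2 * m}" for \<pi>
  proof -
    have "(\<lambda>z. restrict (z \<circ> \<pi>) {..<2 * m})
        \<in> measurable (PiM {..<2 * m} (\<lambda>_. borel :: 'x measure)) (PiM {..<2 * m} (\<lambda>_. borel))"
      using permutes_in_image[OF that]
      by (auto intro!: measurable_restrict measurable_component_singleton simp: comp_def)
    from measurable_compose[OF this eta_measurable[OF assms]] show ?thesis by (simp add: comp_def)
  qed
  moreover have "eta m h (x \<circ> \<pi>) = eta m h (restrict (x \<circ> \<pi>) {..<2 * m})" for x :: "nat \<Rightarrow> 'x" and \<pi>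
    by (rule eta_cong) simp
  ultimately show ?thesis
    unfolding eta_tilde_def[abs_def] by (auto intro!: borel_measurable_times borel_measurable_sum)
qed

lemma kernel_symmetric_eta_tilde:
  fixes h :: "(nat \<Rightarrow> 'x) \<Rightarrow> real"
  shows "kernel_symmetric (2 * m) (eta_tilde m h)"
  unfolding kernel_symmetric_def
proof (intro allI impI)
  fix x :: "nat \<Rightarrow> 'x" and \<rho> assume \<rho>: "\<rho> permutes {..<2 * m}"
  have "eta_tilde m h (restrict (x \<circ> \<rho>) {..<2 * m}) = eta_tilde m h (x \<circ> \<rho>)"
    by (rule eta_tilde_cong) simp
  also have "\<dots> = eta_tilde m h x"
  proof -
    have "(\<Sum>\<pi> | \<pi> permutes {..<2 * m}. eta m h (x \<circ> \<rho> \<circ> \<pi>))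
        = (\<Sum>\<pi> | \<pi> permutes {..<2 * m}. eta m h (x \<circ> (\<rho> \<circ> \<pi>)))"
      by (simp only: comp_assoc)
    also have "\<dots> = (\<Sum>\<pi> | \<pi> permutes {..<2 * m}. eta m h (x \<circ> \<pi>))"
      by (rule setum_permutations_compose_left[OF \<rho>, symmetric])
    finally show ?thesis by (simp add: eta_tilde_def)
  qed
  also have "\<dots> = eta_tilde m h (restrict x {..<2 * m})"
    by (rule eta_tilde_cong) simp
  finally show "eta_tilde m h (restrict (x \<circ> \<rho>) {..<2 * m}) = eta_tilde m h (restrict x {..<2 * m})" .
qed

locale iid_sample = prob_space +
  fixes X :: "nat \<Rightarrow> 'a \<Rightarrow> 'b::topological_space" and n :: nat
  assumes X_measurable: "\<And>i. i < n \<Longrightarrow> X i \<in> borel_measurable M"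
    and X_indep: "indep_vars (\<lambda>_. borel) X {..<n}"
    and X_identical: "\<And>i. i < n \<Longrightarrow> distr M borel (X i) = distr M borel (X 0)"
begin

lemma measurable_restrict_sample:
  assumes "\<And>i. i < r \<Longrightarrow> p i < n"
  shows "(\<lambda>\<omega>. restrict (\<lambda>i. X (p i) \<omega>) {..<r}) \<in> measurable M (PiM {..<r} (\<lambda>_. borel))"
  using assms X_measurable by (auto intro!: measurable_restrict)

lemma measurable_kernel_sample:
  fixes g :: "(nat \<Rightarrow> 'b) \<Rightarrow> real"
  assumes "g \<in> borel_measurable (PiM {..<r} (\<lambda>_. borel))"
    and local: "\<And>x y. (\<And>i. i < r \<Longrightarrow> x i = y i) \<Longrightarrow> g x = g y"
    and "\<And>i. i < r \<Longrightarrow> p i < n"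
  shows "(\<lambda>\<omega>. g (\<lambda>i. X (p i) \<omega>)) \<in> borel_measurable M"
proof -
  have "g (\<lambda>i. X (p i) \<omega>) = g (restrict (\<lambda>i. X (p i) \<omega>) {..<r})" for \<omega>
    by (rule local) simp
  then show ?thesis
    using measurable_compose[OF measurable_restrict_sample[OF assms(3)] assms(1)]
    by (simp add: comp_def)
qed

lemma indep_vars_sample_reindex:
  assumes "inj_on p {..<r}" "p ` {..<r} \<subseteq> {..<n}"
  shows "indep_vars (\<lambda>_. borel) (\<lambda>i \<omega>. X (p i) \<omega>) {..<r}"
proof -
  have "disjoint_family_on (\<lambda>i. {p i}) {..<r}"
    using assms(1) by (auto simp: disjoint_family_on_def inj_on_def)
  then have "indep_vars (\<lambda>i. PiM {p i} (\<lambda>_. borel)) (\<lambda>i \<omega>. restrict (\<lambda>l. X l \<omega>) {p i}) {..<r}"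
    using assms(2) by (intro indep_vars_restrict[OF X_indep]) auto
  then have "indep_vars (\<lambda>_. borel) (\<lambda>i \<omega>. (\<lambda>z. z (p i)) (restrict (\<lambda>l. X l \<omega>) {p i})) {..<r}"
    by (rule indep_vars_compose2) (rule measurable_component_singleton, simp)
  then show ?thesis by simp
qed

lemma distr_sample_reindex:
  assumes "inj_on p {..<r}" "p ` {..<r} \<subseteq> {..<n}" "0 < r"
  shows "distr M (PiM {..<r} (\<lambda>_. borel)) (\<lambda>\<omega>. restrict (\<lambda>i. X (p i) \<omega>) {..<r})
       = PiM {..<r} (\<lambda>_. distr M borel (X 0))"
proof -
  have "distr M (PiM {..<r} (\<lambda>_. borel)) (\<lambda>\<omega>. restrict (\<lambda>i. X (p i) \<omega>) {..<r})
      = PiM {..<r} (\<lambda>i. distr M borel (X (p i)))"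
    using assms X_measurable indep_vars_sample_reindex[OF assms(1,2)]
    by (subst indep_vars_iff_distr_eq_PiM'[symmetric]) auto
  also have "\<dots> = PiM {..<r} (\<lambda>_. distr M borel (X 0))"
    using assms(2) X_identical by (intro PiM_cong) auto
  finally show ?thesis .
qed

lemma distr_kernel_sample_reindex:
  fixes f :: "(nat \<Rightarrow> 'b) \<Rightarrow> real"
  assumes "inj_on p {..<r}" "p ` {..<r} \<subseteq> {..<n}" "0 < r" "r \<le> n"
    and f: "f \<in> borel_measurable (PiM {..<r} (\<lambda>_. borel))"
  shows "distr M borel (\<lambda>\<omega>. f (restrict (\<lambda>i. X (p i) \<omega>) {..<r}))
       = distr M borel (\<lambda>\<omega>. f (restrict (\<lambda>i. X i \<omega>) {..<r}))"
proof -
  have distr_f: "distr M borel (\<lambda>\<omega>. f (restrict (\<lambda>i. X (q i) \<omega>) {..<r}))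
      = distr (PiM {..<r} (\<lambda>_. distr M borel (X 0))) borel f"
    if "inj_on q {..<r}" "q ` {..<r} \<subseteq> {..<n}" for q
  proof -
    have "\<And>i. i < r \<Longrightarrow> q i < n" using that(2) by auto
    from distr_distr[OF f measurable_restrict_sample[of r q, OF this]] show ?thesis
      using distr_sample_reindex[OF that \<open>0 < r\<close>] by (simp add: comp_def)
  qed
  show ?thesis
    using distr_f[OF assms(1,2)] distr_f[of "\<lambda>i. i"] \<open>r \<le> n\<close> by auto
qed

lemma indep_var_kernel_halves:
  fixes h :: "(nat \<Rightarrow> 'b) \<Rightarrow> real"
  assumes h: "h \<in> borel_measurable (PiM {..<m} (\<lambda>_. borel))"
    and p: "inj_on p {..<2 * m}" "p ` {..<2 * m} \<subseteq> {..<n}"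
  shows "indep_var borel (\<lambda>\<omega>. h (restrict (\<lambda>i. X (p i) \<omega>) {..<m}))
    borel (\<lambda>\<omega>. h (restrict (\<lambda>i. X (p (m + i)) \<omega>) {..<m}))"
proof -
  have halves: "indep_var (PiM {..<m} (\<lambda>_. borel)) (\<lambda>\<omega>. restrict (\<lambda>i. X (p i) \<omega>) {..<m})
      (PiM {m..<2 * m} (\<lambda>_. borel)) (\<lambda>\<omega>. restrict (\<lambda>i. X (p i) \<omega>) {m..<2 * m})"
    by (rule indep_var_restrict[OF indep_vars_sample_reindex[OF p]]) auto
  have shift:
    "(\<lambda>z. h (restrict (\<lambda>i. z (m + i)) {..<m})) \<in> borel_measurable (PiM {m..<2 * m} (\<lambda>_. borel))"
    using measurable_compose[OF _ h, of "\<lambda>z. restrict (\<lambda>i. z (m + i)) {..<m}"]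
    by (auto intro!: measurable_restrict measurable_component_singleton simp: comp_def)
  show ?thesis
    using indep_var_compose[OF halves h shift] by (simp add: comp_def cong: restrict_cong)
qed

lemma expectation_eta:
  fixes h :: "(nat \<Rightarrow> 'b) \<Rightarrow> real"
  assumes "1 \<le> m" and h: "h \<in> borel_measurable (PiM {..<m} (\<lambda>_. borel))" "\<And>x. h x \<in> {0..1}"
    and p: "inj_on p {..<2 * m}" "p ` {..<2 * m} \<subseteq> {..<n}"
  shows "expectation (\<lambda>\<omega>. eta m h (\<lambda>i. X (p i) \<omega>)) = variance (\<lambda>\<omega>. h (restrict (\<lambda>i. X i \<omega>) {..<m}))"
proof -
  define A where "A \<omega> = h (restrict (\<lambda>i. X (p i) \<omega>) {..<m})" for \<omega>
  define B where "B \<omega> = h (restrict (\<lambda>i. X (p (m + i)) \<omega>) {..<m})" for \<omega>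
  define H where "H \<omega> = h (restrict (\<lambda>i. X i \<omega>) {..<m})" for \<omega>
  have "2 * m \<le> n" using card_inj_on_le[OF p] by simp
  have p_less: "p i < n" if "i < 2 * m" for i using p(2) that by auto
  have first: "inj_on p {..<m}" "p ` {..<m} \<subseteq> {..<n}"
    using p p_less by (auto intro: inj_on_subset)
  have second: "inj_on (\<lambda>i. p (m + i)) {..<m}" "(\<lambda>i. p (m + i)) ` {..<m} \<subseteq> {..<n}"
    using p_less by (auto intro!: inj_onI dest: inj_onD[OF p(1)])
  have "indep_var borel A borel B"
    unfolding A_def[abs_def] B_def[abs_def] by (rule indep_var_kernel_halves[OF h(1) p])
  then have "expectation (\<lambda>\<omega>. (A \<omega> - B \<omega>)\<^sup>2 / 2) = variance H"
  proof (rule expectation_half_sq_diff_eq_variance[where c = 1])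
    show "random_variable borel H"
      unfolding H_def using \<open>2 * m \<le> n\<close>
      by (intro measurable_compose[OF measurable_restrict_sample h(1), unfolded comp_def]) auto
    show "\<bar>A \<omega>\<bar> \<le> 1 \<and> \<bar>B \<omega>\<bar> \<le> 1 \<and> \<bar>H \<omega>\<bar> \<le> 1" for \<omega>
      using h(2) by (auto simp: A_def B_def H_def abs_le_iff intro: order_trans[of _ 0])
    show "distr M borel A = distr M borel H" "distr M borel B = distr M borel H"
      unfolding A_def B_def H_def using \<open>1 \<le> m\<close> \<open>2 * m \<le> n\<close>
      by (intro distr_kernel_sample_reindex first second h(1); simp)+
  qed
  moreover have "(\<lambda>\<omega>. eta m h (\<lambda>i. X (p i) \<omega>)) = (\<lambda>\<omega>. (A \<omega> - B \<omega>)\<^sup>2 / 2)"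
    by (simp add: fun_eq_iff eta_def A_def B_def)
  ultimately show ?thesis unfolding H_def[abs_def] by (simp only:)
qed

lemma expectation_eta_tilde:
  fixes h :: "(nat \<Rightarrow> 'b) \<Rightarrow> real"
  assumes "1 \<le> m" and h: "h \<in> borel_measurable (PiM {..<m} (\<lambda>_. borel))" "\<And>x. h x \<in> {0..1}"
    and p: "inj_on p {..<2 * m}" "p ` {..<2 * m} \<subseteq> {..<n}"
  shows "expectation (\<lambda>\<omega>. eta_tilde m h (\<lambda>i. X (p i) \<omega>))
       = variance (\<lambda>\<omega>. h (restrict (\<lambda>i. X i \<omega>) {..<m}))"
proof -
  let ?P = "{\<pi>. \<pi> permutes {..<2 * m}}"
  let ?V = "variance (\<lambda>\<omega>. h (restrict (\<lambda>i. X i \<omega>) {..<m}))"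
  have p\<pi>: "inj_on (p \<circ> \<pi>) {..<2 * m}" "(p \<circ> \<pi>) ` {..<2 * m} \<subseteq> {..<n}" if "\<pi> \<in> ?P" for \<pi>
  proof -
    have \<pi>: "\<pi> permutes {..<2 * m}" using that by simp
    show "inj_on (p \<circ> \<pi>) {..<2 * m}"
      by (rule comp_inj_on[OF permutes_inj_on[OF \<pi>]]) (simp add: permutes_image[OF \<pi>] p(1))
    show "(p \<circ> \<pi>) ` {..<2 * m} \<subseteq> {..<n}"
      by (metis image_comp permutes_image[OF \<pi>] p(2))
  qed
  have integrable: "integrable M (\<lambda>\<omega>. eta m h (\<lambda>i. X ((p \<circ> \<pi>) i) \<omega>))" if "\<pi> \<in> ?P" for \<pi>
  proof (rule integrable_const_bound[where B = 1])
    show "(\<lambda>\<omega>. eta m h (\<lambda>i. X ((p \<circ> \<pi>) i) \<omega>)) \<in> borel_measurable M"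
      using p\<pi>[OF that] by (intro measurable_kernel_sample[OF eta_measurable[OF h(1)] eta_cong]) auto
    show "AE \<omega> in M. norm (eta m h (\<lambda>i. X ((p \<circ> \<pi>) i) \<omega>)) \<le> 1"
    proof (rule AE_I2)
      fix \<omega>
      show "norm (eta m h (\<lambda>i. X ((p \<circ> \<pi>) i) \<omega>)) \<le> 1"
        using eta_range[where h = h and m = m and x = "\<lambda>i. X ((p \<circ> \<pi>) i) \<omega>", OF h(2)] by auto
    qed
  qed
  have "expectation (\<lambda>\<omega>. eta_tilde m h (\<lambda>i. X (p i) \<omega>))
      = (1 / fact (2 * m)) * (\<Sum>\<pi>\<in>?P. expectation (\<lambda>\<omega>. eta m h (\<lambda>i. X ((p \<circ> \<pi>) i) \<omega>)))"
    using integrable by (simp add: eta_tilde_def comp_def Bochner_Integration.integral_sum)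
  also have "\<dots> = (1 / fact (2 * m)) * (\<Sum>\<pi>\<in>?P. ?V)"
    using expectation_eta[OF assms(1) h p\<pi>] by simp
  also have "\<dots> = ?V" using card_permutations[of "{..<2 * m}" "2 * m"] by simp
  finally show ?thesis .
qed

end

section \<open>Concentration of U-statistics\<close>

context iid_sample
begin

lemma ustat_measurable:
  fixes g :: "(nat \<Rightarrow> 'b) \<Rightarrow> real"
  assumes "g \<in> borel_measurable (PiM {..<q} (\<lambda>_. borel))"
    and local: "\<And>x y. (\<And>i. i < q \<Longrightarrow> x i = y i) \<Longrightarrow> g x = g y"
  shows "ustat n q g X \<in> borel_measurable M"
proof -
  have "(\<lambda>\<omega>. g (\<lambda>j. X (sorted_list_of_set K ! j) \<omega>)) \<in> borel_measurable M"
    if "K \<subseteq> {..<n}" "card K = q" for K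
  proof (rule measurable_kernel_sample[OF assms])
    fix i assume "i < q"
    then have "sorted_list_of_set K ! i \<in> K"
      using that finite_subset[OF that(1)]
      by (metis finite_lessThan nth_mem length_sorted_list_of_set set_sorted_list_of_set)
    then show "sorted_list_of_set K ! i < n" using that by blast
  qed
  then show ?thesis unfolding ustat_def[abs_def] by (auto intro!: borel_measurable_sum)
qed

lemma ustat_eq_block_average:
  fixes g :: "(nat \<Rightarrow> 'b) \<Rightarrow> real"
  assumes local: "\<And>x y. (\<And>i. i < q \<Longrightarrow> x i = y i) \<Longrightarrow> g x = g y"
    and "kernel_symmetric q g" "0 < k" "q * k \<le> n"
  shows "ustat n q g X \<omega>
       = (\<Sum>\<pi> | \<pi> permutes {..<n}. \<Sum>j<k. g (\<lambda>i. X (\<pi> (q * j + i)) \<omega>)) / (fact n * real k)"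
  unfolding ustat_def
proof (rule average_subsets_eq_average_permutes_blocks[where G = "\<lambda>t. g (\<lambda>i. X (t i) \<omega>)"])
  show "g (\<lambda>i. X (t i) \<omega>) = g (\<lambda>i. X (t' i) \<omega>)" if "\<And>i. i < q \<Longrightarrow> t i = t' i" for t t'
    using that by (auto intro: local)
  show "g (\<lambda>i. X ((t \<circ> \<rho>) i) \<omega>) = g (\<lambda>i. X (t i) \<omega>)" if "\<rho> permutes {..<q}" for t \<rho>
    using kernel_symmetric_comp[OF assms(2) local that, of "\<lambda>i. X (t i) \<omega>"] by (simp add: comp_def)
qed (use assms in auto)

lemma indep_vars_blocks:
  fixes g :: "(nat \<Rightarrow> 'b) \<Rightarrow> real"
  assumes \<pi>: "\<pi> permutes {..<n}" and "q * k \<le> n"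
    and g: "g \<in> borel_measurable (PiM {..<q} (\<lambda>_. borel))"
    and local: "\<And>x y. (\<And>i. i < q \<Longrightarrow> x i = y i) \<Longrightarrow> g x = g y"
  shows "indep_vars (\<lambda>_. borel) (\<lambda>j \<omega>. g (\<lambda>i. X (\<pi> (q * j + i)) \<omega>)) {..<k}"
proof -
  define block where "block j = (\<lambda>i. \<pi> (q * j + i)) ` {..<q}" for j
  have block_less: "\<pi> (q * j + i) < n" if "j < k" "i < q" for i j
    using block_index_less[OF that \<open>q * k \<le> n\<close>] permutes_in_image[OF \<pi>] by simp
  have disjoint: "disjoint_family_on block {..<k}"
    using permutes_inj[OF \<pi>]
    by (auto simp: disjoint_family_on_def block_def inj_eq block_index_eq_iff)
  have blocks:
    "indep_vars (\<lambda>j. PiM (block j) (\<lambda>_. borel)) (\<lambda>j \<omega>. restrict (\<lambda>l. X l \<omega>) (block j)) {..<k}"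
    by (rule indep_vars_restrict[OF X_indep _ disjoint]) (use block_less in \<open>auto simp: block_def\<close>)
  define G where "G j z = g (restrict (\<lambda>i. z (\<pi> (q * j + i))) {..<q})" for j and z :: "nat \<Rightarrow> 'b"
  have "G j \<in> borel_measurable (PiM (block j) (\<lambda>_. borel))" for j
    using measurable_compose[OF _ g, of "\<lambda>z. restrict (\<lambda>i. z (\<pi> (q * j + i))) {..<q}"]
    by (auto intro!: measurable_restrict measurable_component_singleton
        simp: G_def[abs_def] block_def comp_def)
  from indep_vars_compose2[OF blocks this]
  have "indep_vars (\<lambda>_. borel) (\<lambda>j \<omega>. G j (restrict (\<lambda>l. X l \<omega>) (block j))) {..<k}" .
  moreover have "G j (restrict (\<lambda>l. X l \<omega>) (block j)) = g (\<lambda>i. X (\<pi> (q * j + i)) \<omega>)" for j \<omega>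
    unfolding G_def by (rule local) (auto simp: block_def)
  ultimately show ?thesis by simp
qed

lemma ustat_concentration:
  fixes g :: "(nat \<Rightarrow> 'b) \<Rightarrow> real"
  assumes "0 < q" "q \<le> n"
    and g: "g \<in> borel_measurable (PiM {..<q} (\<lambda>_. borel))"
    and local: "\<And>x y. (\<And>i. i < q \<Longrightarrow> x i = y i) \<Longrightarrow> g x = g y"
    and symmetric: "kernel_symmetric q g"
    and range: "\<And>x. g x \<in> {0..1/2}"
    and mean: "\<And>p. inj_on p {..<q} \<Longrightarrow> p ` {..<q} \<subseteq> {..<n} \<Longrightarrow>
      expectation (\<lambda>\<omega>. g (\<lambda>i. X (p i) \<omega>)) = \<mu>"
    and "0 < L" "1 \<le> c"
  shows "1 - exp (- real (n div q) * L)
      \<le> prob {\<omega> \<in> space M. sqrt (ustat n q g X \<omega>) \<le> sqrt \<mu> + c * sqrt L}"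
    and "1 - exp (- real (n div q) * L)
      \<le> prob {\<omega> \<in> space M. sqrt \<mu> \<le> sqrt (ustat n q g X \<omega>) + c * sqrt L}"
proof -
  define k where "k = n div q"
  have "0 < k" using assms(1,2) by (simp add: k_def div_greater_zero_iff)
  have "q * k \<le> n" by (simp add: k_def)
  define P where "P = {\<pi>. \<pi> permutes {..<n}}"
  define Y where "Y \<pi> j \<omega> = g (\<lambda>i. X (\<pi> (q * j + i)) \<omega>)" for \<pi> j \<omega>
  interpret block_means M P k Y \<mu> "ustat n q g X"
  proof
    show "finite P" unfolding P_def by (rule finite_permutations) simp
    show "P \<noteq> {}" using permutes_id[of "{..<n}"] unfolding P_def by blast
    show "0 < k" by (rule \<open>0 < k\<close>)
    show "indep_vars (\<lambda>_. borel) (Y \<pi>) {..<k}" if "\<pi> \<in> P" for \<pi>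
      using indep_vars_blocks[OF _ \<open>q * k \<le> n\<close> g local] that by (simp add: P_def Y_def[abs_def])
    show "Y \<pi> j \<omega> \<in> {0..1/2}" for \<pi> j \<omega> unfolding Y_def by (rule range)
    show "expectation (Y \<pi> j) = \<mu>" if "\<pi> \<in> P" "j < k" for \<pi> j
    proof -
      have \<pi>: "\<pi> permutes {..<n}" using that by (simp add: P_def)
      have "inj_on (\<lambda>i. \<pi> (q * j + i)) {..<q}"
        by (rule inj_on_block[OF permutes_inj[OF \<pi>]])
      moreover have "(\<lambda>i. \<pi> (q * j + i)) ` {..<q} \<subseteq> {..<n}"
        using block_index_less[OF that(2) _ \<open>q * k \<le> n\<close>] permutes_in_image[OF \<pi>] by auto
      ultimately show ?thesis using mean by (simp add: Y_def[abs_def])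
    qed
    show "ustat n q g X \<omega> = (\<Sum>\<pi>\<in>P. \<Sum>j<k. Y \<pi> j \<omega>) / (real (card P) * real k)" for \<omega>
      using ustat_eq_block_average[OF local symmetric \<open>0 < k\<close> \<open>q * k \<le> n\<close>]
        card_permutations[of "{..<n}" n] by (simp add: P_def Y_def)
    show "ustat n q g X \<in> borel_measurable M" by (rule ustat_measurable[OF g local])
  qed
  show "1 - exp (- real (n div q) * L)
      \<le> prob {\<omega> \<in> space M. sqrt (ustat n q g X \<omega>) \<le> sqrt \<mu> + c * sqrt L}"
    using prob_sqrt_upper[OF assms(8,9)] by (simp add: k_def)
  show "1 - exp (- real (n div q) * L)
      \<le> prob {\<omega> \<in> space M. sqrt \<mu> \<le> sqrt (ustat n q g X \<omega>) + c * sqrt L}"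
    using prob_sqrt_lower[OF assms(8,9)] by (simp add: k_def)
qed

lemma ustat_confidence_bounds:
  fixes g :: "(nat \<Rightarrow> 'b) \<Rightarrow> real"
  assumes "0 < q" "q \<le> n"
    and "g \<in> borel_measurable (PiM {..<q} (\<lambda>_. borel))"
    and "\<And>x y. (\<And>i. i < q \<Longrightarrow> x i = y i) \<Longrightarrow> g x = g y"
    and "kernel_symmetric q g"
    and "\<And>x. g x \<in> {0..1/2}"
    and "\<And>p. inj_on p {..<q} \<Longrightarrow> p ` {..<q} \<subseteq> {..<n} \<Longrightarrow>
      expectation (\<lambda>\<omega>. g (\<lambda>i. X (p i) \<omega>)) = \<mu>"
    and "0 < \<delta>" "\<delta> < 1" "1 \<le> c"
  defines "r \<equiv> sqrt (1 / of_int \<lfloor>real n / real q\<rfloor> * ln (1 / \<delta>))"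
  shows "1 - \<delta> \<le> prob {\<omega> \<in> space M. sqrt (ustat n q g X \<omega>) \<le> sqrt \<mu> + c * r}"
    and "1 - \<delta> \<le> prob {\<omega> \<in> space M. sqrt \<mu> \<le> sqrt (ustat n q g X \<omega>) + c * r}"
proof -
  define L where "L = ln (1 / \<delta>) / real (n div q)"
  have "0 < n div q" using assms(1,2) by (simp add: div_greater_zero_iff)
  then have "0 < L" using assms(8,9) by (simp add: L_def)
  have rate: "exp (- real (n div q) * L) = \<delta>"
    using \<open>0 < n div q\<close> assms(8) by (simp add: L_def ln_div)
  have "\<lfloor>real n / real q\<rfloor> = int (n div q)" by (rule floor_divide_of_nat_eq)
  then have "sqrt L = r" unfolding r_def L_def by simp
  have "1 - exp (- real (n div q) * L)
      \<le> prob {\<omega> \<in> space M. sqrt (ustat n q g X \<omega>) \<le> sqrt \<mu> + c * sqrt L}"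
    using assms(1-7) \<open>0 < L\<close> assms(10) by (rule ustat_concentration(1))
  moreover have "1 - exp (- real (n div q) * L)
      \<le> prob {\<omega> \<in> space M. sqrt \<mu> \<le> sqrt (ustat n q g X \<omega>) + c * sqrt L}"
    using assms(1-7) \<open>0 < L\<close> assms(10) by (rule ustat_concentration(2))
  ultimately show "1 - \<delta> \<le> prob {\<omega> \<in> space M. sqrt (ustat n q g X \<omega>) \<le> sqrt \<mu> + c * r}"
    "1 - \<delta> \<le> prob {\<omega> \<in> space M. sqrt \<mu> \<le> sqrt (ustat n q g X \<omega>) + c * r}"
    unfolding rate \<open>sqrt L = r\<close> .
qed

end

lemma one_le_sqrt_consts:
  "1 \<le> sqrt 2 / 2 + sqrt 6 / (6::real)" "1 \<le> sqrt 2 / 2 + sqrt 42 / (6::real)"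
proof -
  have "1.4 \<le> sqrt (2::real)" "2.4 \<le> sqrt (6::real)" "6 \<le> sqrt (42::real)"
    by (rule real_le_rsqrt; simp add: power2_eq_square)+
  then show "1 \<le> sqrt 2 / 2 + sqrt 6 / (6::real)" "1 \<le> sqrt 2 / 2 + sqrt 42 / (6::real)"
    by simp_all
qed

theorem proposition5:
  fixes M :: "'a measure"
    and X :: "nat \<Rightarrow> 'a \<Rightarrow> real ^ 'd"
    and h :: "(nat \<Rightarrow> real ^ 'd) \<Rightarrow> real"
    and m n :: nat and \<delta> :: real
  assumes "prob_space M"
    and "\<And>i. i < n \<Longrightarrow> X i \<in> borel_measurable M"
    and "prob_space.indep_vars M (\<lambda>_. borel) X {..<n}"
    and "\<And>i. i < n \<Longrightarrow> distr M borel (X i) = distr M borel (X 0)"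
    and "m \<ge> 1"
    and "h \<in> borel_measurable (PiM {..<m} (\<lambda>_. borel))"
    and "\<And>x. h x \<in> {0..1}"
    and "kernel_symmetric m h"
    and "n \<ge> 2 * m"
    and "0 < \<delta>" and "\<delta> < 1"
  defines "\<sigma>2 \<equiv> prob_space.variance M (\<lambda>\<omega>. h (restrict (\<lambda>i. X i \<omega>) {..<m}))"
    and "r \<equiv> sqrt (1 / of_int \<lfloor>real n / real (2 * m)\<rfloor> * ln (1 / \<delta>))"
    and "W \<equiv> ustat n (2 * m) (eta m h) X"
    and "Wt \<equiv> ustat n (2 * m) (eta_tilde m h) X"
  shows "(kernel_symmetric (2 * m) (eta m h) \<longrightarrow>
            measure M {\<omega> \<in> space M. sqrt (W \<omega>) \<le> sqrt \<sigma>2 + (sqrt 2 / 2 + sqrt 6 / 6) * r} \<ge> 1 - \<delta>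
          \<and> measure M {\<omega> \<in> space M. sqrt \<sigma>2 \<le> sqrt (W \<omega>) + (sqrt 2 / 2 + sqrt 42 / 6) * r} \<ge> 1 - \<delta>)
       \<and> measure M {\<omega> \<in> space M. sqrt (Wt \<omega>) \<le> sqrt \<sigma>2 + (sqrt 2 / 2 + sqrt 6 / 6) * r} \<ge> 1 - \<delta>
       \<and> measure M {\<omega> \<in> space M. sqrt \<sigma>2 \<le> sqrt (Wt \<omega>) + (sqrt 2 / 2 + sqrt 42 / 6) * r} \<ge> 1 - \<delta>"
proof -
  interpret iid_sample M X n
    by (intro iid_sample.intro iid_sample_axioms.intro assms(1-4))
  have "0 < 2 * m" using assms(5) by simp
  note confidence = ustat_confidence_bounds[OF this assms(9) _ _ _ _ _ assms(10,11), folded r_def]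
  have mean: "expectation (\<lambda>\<omega>. eta m h (\<lambda>i. X (p i) \<omega>)) = \<sigma>2"
    "expectation (\<lambda>\<omega>. eta_tilde m h (\<lambda>i. X (p i) \<omega>)) = \<sigma>2"
    if "inj_on p {..<2 * m}" "p ` {..<2 * m} \<subseteq> {..<n}" for p
    unfolding \<sigma>2_def
    by (rule expectation_eta[OF assms(5-7) that], rule expectation_eta_tilde[OF assms(5-7) that])
  have "1 - \<delta> \<le> prob {\<omega> \<in> space M. sqrt (W \<omega>) \<le> sqrt \<sigma>2 + (sqrt 2 / 2 + sqrt 6 / 6) * r}
      \<and> 1 - \<delta> \<le> prob {\<omega> \<in> space M. sqrt \<sigma>2 \<le> sqrt (W \<omega>) + (sqrt 2 / 2 + sqrt 42 / 6) * r}"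
    if "kernel_symmetric (2 * m) (eta m h)"
    unfolding W_def
    by (intro conjI confidence eta_measurable[OF assms(6)] eta_cong that
        eta_range[where h = h, OF assms(7)] mean one_le_sqrt_consts)
  moreover have "1 - \<delta> \<le> prob {\<omega> \<in> space M. sqrt (Wt \<omega>) \<le> sqrt \<sigma>2 + (sqrt 2 / 2 + sqrt 6 / 6) * r}
      \<and> 1 - \<delta> \<le> prob {\<omega> \<in> space M. sqrt \<sigma>2 \<le> sqrt (Wt \<omega>) + (sqrt 2 / 2 + sqrt 42 / 6) * r}"
    unfolding Wt_def
    by (intro conjI confidence eta_tilde_measurable[OF assms(6)] eta_tilde_cong
        kernel_symmetric_eta_tilde eta_tilde_range[where h = h, OF assms(7)] mean one_le_sqrt_consts)
  ultimately show ?thesis by simp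
qed

end
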